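(* The poset $(\mathcal C_n,\preceq)$ is graded and its rank (the length of any maximal chain) equals $$\frac{9n^5-10n^3+4^{1+(-1)^n}\,n}{240}.$$
   Context: Let $[0,n]=\{0,\dots,n\}$. A corner-sum hypermatrix of order $n$ is an integer array $C=(C_{i,j,k})_{i,j,k\in[0,n]}$ such that for all $i,j\in[0,n]$: $C_{i,j,0}=C_{i,0,j}=C_{0,i,j}=0$, $C_{i,j,n}=C_{i,n,j}=C_{n,i,j}=ij$, and for all $k\in\{1,\dots,n\}$ each of $C_{i,j,k}-C_{i,j,k-1}$, $C_{i,k,j}-C_{i,k-1,j}$, $C_{k,i,j}-C_{k-1,i,j}$ is an integer in $\{\max(0,i+j-n),\dots,\min(i,j)\}$. $\mathcal C_n$ is the set of these, ordered by $C\preceq D$ iff $C\ge D$ entrywise. *)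

theory Defs
  imports Complex_Main
begin

(* Hypermatrices are total functions nat => nat => nat => int; only indices in [0,n]
   matter, and we normalise by requiring the entries outside [0,n]^3 to be 0. *)

definition step_ok :: "nat \<Rightarrow> nat \<Rightarrow> nat \<Rightarrow> int \<Rightarrow> bool" where
  "step_ok n i j d \<longleftrightarrow> max 0 (int i + int j - int n) \<le> d \<and> d \<le> int (min i j)"

definition corner_sum :: "nat \<Rightarrow> (nat \<Rightarrow> nat \<Rightarrow> nat \<Rightarrow> int) \<Rightarrow> bool" where
  "corner_sum n C \<longleftrightarrow>
     (\<forall>i j k. (n < i \<or> n < j \<or> n < k) \<longrightarrow> C i j k = 0) \<and>
     (\<forall>i\<le>n. \<forall>j\<le>n. C i j 0 = 0 \<and> C i 0 j = 0 \<and> C 0 i j = 0) \<and>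
     (\<forall>i\<le>n. \<forall>j\<le>n. C i j n = int (i * j) \<and> C i n j = int (i * j) \<and> C n i j = int (i * j)) \<and>
     (\<forall>i\<le>n. \<forall>j\<le>n. \<forall>k\<in>{1..n}.
        step_ok n i j (C i j k - C i j (k - 1)) \<and>
        step_ok n i j (C i k j - C i (k - 1) j) \<and>
        step_ok n i j (C k i j - C (k - 1) i j))"

definition CS :: "nat \<Rightarrow> (nat \<Rightarrow> nat \<Rightarrow> nat \<Rightarrow> int) set" where
  "CS n = {C. corner_sum n C}"

definition prec :: "nat \<Rightarrow> (nat \<Rightarrow> nat \<Rightarrow> nat \<Rightarrow> int) \<Rightarrow> (nat \<Rightarrow> nat \<Rightarrow> nat \<Rightarrow> int) \<Rightarrow> bool" where
  "prec n C D \<longleftrightarrow> (\<forall>i\<le>n. \<forall>j\<le>n. \<forall>k\<le>n. D i j k \<le> C i j k)"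

definition is_chain :: "'a set \<Rightarrow> ('a \<Rightarrow> 'a \<Rightarrow> bool) \<Rightarrow> 'a set \<Rightarrow> bool" where
  "is_chain P le S \<longleftrightarrow> S \<subseteq> P \<and> (\<forall>x\<in>S. \<forall>y\<in>S. le x y \<or> le y x)"

definition is_maximal_chain :: "'a set \<Rightarrow> ('a \<Rightarrow> 'a \<Rightarrow> bool) \<Rightarrow> 'a set \<Rightarrow> bool" where
  "is_maximal_chain P le S \<longleftrightarrow> is_chain P le S \<and> (\<forall>T. is_chain P le T \<and> S \<subseteq> T \<longrightarrow> T = S)"

definition chain_length :: "'a set \<Rightarrow> nat" where
  "chain_length S = card S - 1"

definition graded_of_rank :: "'a set \<Rightarrow> ('a \<Rightarrow> 'a \<Rightarrow> bool) \<Rightarrow> nat \<Rightarrow> bool" where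
  "graded_of_rank P le r \<longleftrightarrow> finite P \<and> P \<noteq> {} \<and>
     (\<forall>S. is_maximal_chain P le S \<longrightarrow> chain_length S = r)"

end

theory Submission
  imports Defs "HOL-Library.FuncSet"
begin

(* The entrywise minimum of all corner-sum hypermatrices is itself one: telescoping along the
   axis of the smallest index bounds every entry from below, and the bound is attained.  The
   symmetry C(i,j,k) |-> ij - C(i,j,n-k) turns it into the entrywise maximum, so the poset has a
   top and a bottom element.  If C and D are distinct with C >= D entrywise, lowering C by one at
   a position where C > D and nC - ijk is largest gives a corner-sum hypermatrix between them.
   So the sum of all entries drops by exactly one along every covering relation, and every
   maximal chain has length equal to the difference of the entry sums of the two extremes.  This
   difference is a sum of piecewise polynomials in i, j, k, evaluated by induction on n in steps
   of two. *)

section \<open>Graded posets with a unit-step rank function\<close>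

lemma maximal_chain_insert:
  assumes "is_maximal_chain P le S" "z \<in> P" "le z z" "\<And>x. x \<in> S \<Longrightarrow> le x z \<or> le z x"
  shows "z \<in> S"
proof -
  have "is_chain P le (insert z S)"
    using assms unfolding is_maximal_chain_def is_chain_def by blast
  then have "insert z S = S"
    using assms(1) unfolding is_maximal_chain_def by blast
  then show ?thesis by blast
qed

locale unit_step_rank =
  fixes P :: "'a set" and le :: "'a \<Rightarrow> 'a \<Rightarrow> bool" and f :: "'a \<Rightarrow> int"
  assumes refl: "x \<in> P \<Longrightarrow> le x x"
    and trans: "x \<in> P \<Longrightarrow> y \<in> P \<Longrightarrow> z \<in> P \<Longrightarrow> le x y \<Longrightarrow> le y z \<Longrightarrow> le x z"
    and strict_mono: "x \<in> P \<Longrightarrow> y \<in> P \<Longrightarrow> le x y \<Longrightarrow> x \<noteq> y \<Longrightarrow> f x < f y"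
    and unit_step: "x \<in> P \<Longrightarrow> y \<in> P \<Longrightarrow> le x y \<Longrightarrow> x \<noteq> y \<Longrightarrow> \<exists>z\<in>P. le x z \<and> le z y \<and> f z = f x + 1"
begin

lemma chain_le_iff_rank_le:
  assumes "is_chain P le S" "x \<in> S" "y \<in> S"
  shows "le x y \<longleftrightarrow> f x \<le> f y"
proof -
  have "x \<in> P" "y \<in> P" "le x y \<or> le y x"
    using assms unfolding is_chain_def by blast+
  then show ?thesis
    using strict_mono[of x y] strict_mono[of y x] by fastforce
qed

lemma maximal_chain_rank_gap:
  assumes max_chain: "is_maximal_chain P le S"
    and x: "x \<in> S" and y: "y \<in> S" and "f x < f y"
    and no_between: "\<And>w. w \<in> S \<Longrightarrow> f w \<le> f x \<or> f y \<le> f w"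
  shows "f y = f x + 1"
proof -
  have chain: "is_chain P le S" and SP: "S \<subseteq> P"
    using max_chain unfolding is_maximal_chain_def is_chain_def by blast+
  have "le x y" "x \<noteq> y"
    using chain_le_iff_rank_le[OF chain x y] \<open>f x < f y\<close> by auto
  then obtain z where z: "z \<in> P" "le x z" "le z y" "f z = f x + 1"
    using unit_step x y SP by blast
  have "z \<in> S"
  proof (rule maximal_chain_insert[OF max_chain z(1) refl[OF z(1)]])
    fix w assume "w \<in> S"
    have "le w x \<longleftrightarrow> f w \<le> f x" "le y w \<longleftrightarrow> f y \<le> f w"
      using chain_le_iff_rank_le[OF chain \<open>w \<in> S\<close> x] chain_le_iff_rank_le[OF chain y \<open>w \<in> S\<close>]
      by simp_all
    then consider "le w x" | "le y w"
      using no_between[OF \<open>w \<in> S\<close>] by blast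
    then show "le w z \<or> le z w"
      by cases (use trans \<open>w \<in> S\<close> x y z SP in blast)+
  qed
  then show ?thesis
    using no_between[of z] z(4) \<open>f x < f y\<close> by linarith
qed

lemma maximal_chain_rank_image_convex:
  assumes max_chain: "is_maximal_chain P le S" and "finite S"
    and "x0 \<in> S" "y0 \<in> S" "f x0 \<le> v" "v \<le> f y0"
  shows "v \<in> f ` S"
proof (rule ccontr)
  assume v_gap: "v \<notin> f ` S"
  let ?below = "f ` {w\<in>S. f w < v}" and ?above = "f ` {w\<in>S. v < f w}"
  have "f x0 \<in> ?below" "f y0 \<in> ?above" "finite ?below" "finite ?above"
    using assms v_gap by force+
  then have "Max ?below \<in> ?below" "Min ?above \<in> ?above"
    by (intro Max_in Min_in; blast)+
  then obtain x y where x: "x \<in> S" "f x < v" "f x = Max ?below"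
    and y: "y \<in> S" "v < f y" "f y = Min ?above"
    by auto
  have "f w \<le> f x \<or> f y \<le> f w" if "w \<in> S" for w
  proof -
    have "f w \<noteq> v"
      using v_gap that by blast
    then consider "f w < v" | "v < f w"
      by linarith
    then show ?thesis
    proof cases
      case 1
      then have "f w \<in> ?below"
        using that by blast
      then show ?thesis
        using x(3) \<open>finite ?below\<close> by simp
    next
      case 2
      then have "f w \<in> ?above"
        using that by blast
      then show ?thesis
        using y(3) \<open>finite ?above\<close> by simp
    qed
  qed
  then have "f y = f x + 1"
    using maximal_chain_rank_gap[OF max_chain x(1) y(1)] x(2) y(2) by fastforce
  then show False
    using x(2) y(2) by linarith
qed

lemma graded_of_rank_if_bounded:
  assumes fin: "finite P" and lo: "lo \<in> P" and hi: "hi \<in> P"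
    and bounds: "\<And>x. x \<in> P \<Longrightarrow> le lo x \<and> le x hi"
  shows "graded_of_rank P le (nat (f hi - f lo))"
  unfolding graded_of_rank_def
proof (intro conjI allI impI)
  fix S assume max_chain: "is_maximal_chain P le S"
  then have chain: "is_chain P le S" and SP: "S \<subseteq> P"
    unfolding is_maximal_chain_def is_chain_def by blast+
  then have "finite S"
    using fin finite_subset by blast
  have "lo \<in> S" "hi \<in> S"
    using maximal_chain_insert[OF max_chain] lo hi refl bounds SP by blast+
  note le_iff = chain_le_iff_rank_le[OF chain]
  have "inj_on f S"
  proof (rule inj_onI, rule ccontr)
    fix x y assume xy: "x \<in> S" "y \<in> S" "f x = f y" "x \<noteq> y"
    then have "le x y"
      using le_iff[OF xy(1,2)] by simp
    then show False
      using strict_mono[of x y] xy SP by auto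
  qed
  have "f ` S = {f lo..f hi}"
  proof
    show "f ` S \<subseteq> {f lo..f hi}"
    proof
      fix w assume "w \<in> f ` S"
      then obtain x where "x \<in> S" "w = f x"
        by blast
      moreover have "le lo x" "le x hi"
        using bounds \<open>x \<in> S\<close> SP by blast+
      ultimately show "w \<in> {f lo..f hi}"
        using le_iff[OF \<open>lo \<in> S\<close> \<open>x \<in> S\<close>] le_iff[OF \<open>x \<in> S\<close> \<open>hi \<in> S\<close>] by simp
    qed
    show "{f lo..f hi} \<subseteq> f ` S"
      using maximal_chain_rank_image_convex[OF max_chain \<open>finite S\<close> \<open>lo \<in> S\<close> \<open>hi \<in> S\<close>] by auto
  qed
  then have "card S = nat (f hi - f lo + 1)"
    using card_image[OF \<open>inj_on f S\<close>] by simp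
  then show "chain_length S = nat (f hi - f lo)"
    unfolding chain_length_def by linarith
qed (use fin lo in auto)

end

section \<open>Corner-sum hypermatrices\<close>

definition excess :: "nat \<Rightarrow> nat \<Rightarrow> nat \<Rightarrow> int" where
  "excess n i j = max 0 (int i + int j - int n)"

lemma step_ok_iff: "step_ok n i j d \<longleftrightarrow> excess n i j \<le> d \<and> d \<le> int (min i j)"
  unfolding step_ok_def excess_def ..

definition vanishes_outside :: "nat \<Rightarrow> (nat \<Rightarrow> nat \<Rightarrow> nat \<Rightarrow> int) \<Rightarrow> bool" where
  "vanishes_outside n C \<longleftrightarrow> (\<forall>i j k. (n < i \<or> n < j \<or> n < k) \<longrightarrow> C i j k = 0)"

definition boundary_ok :: "nat \<Rightarrow> (nat \<Rightarrow> nat \<Rightarrow> nat \<Rightarrow> int) \<Rightarrow> bool" where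
  "boundary_ok n C \<longleftrightarrow>
     (\<forall>i\<le>n. \<forall>j\<le>n. C i j 0 = 0 \<and> C i 0 j = 0 \<and> C 0 i j = 0) \<and>
     (\<forall>i\<le>n. \<forall>j\<le>n. C i j n = int (i * j) \<and> C i n j = int (i * j) \<and> C n i j = int (i * j))"

definition steps_ok :: "nat \<Rightarrow> (nat \<Rightarrow> nat \<Rightarrow> nat \<Rightarrow> int) \<Rightarrow> bool" where
  "steps_ok n C \<longleftrightarrow> (\<forall>i\<le>n. \<forall>j\<le>n. \<forall>k\<in>{1..n}. step_ok n i j (C i j k - C i j (k - 1)))"

definition swap23 :: "(nat \<Rightarrow> nat \<Rightarrow> nat \<Rightarrow> int) \<Rightarrow> nat \<Rightarrow> nat \<Rightarrow> nat \<Rightarrow> int" where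
  "swap23 C = (\<lambda>i j k. C i k j)"

definition rotate :: "(nat \<Rightarrow> nat \<Rightarrow> nat \<Rightarrow> int) \<Rightarrow> nat \<Rightarrow> nat \<Rightarrow> nat \<Rightarrow> int" where
  "rotate C = (\<lambda>i j k. C k i j)"

lemma corner_sum_iff_steps_ok:
  "corner_sum n C \<longleftrightarrow> vanishes_outside n C \<and> boundary_ok n C \<and>
     steps_ok n C \<and> steps_ok n (swap23 C) \<and> steps_ok n (rotate C)"
  unfolding corner_sum_def vanishes_outside_def boundary_ok_def steps_ok_def swap23_def rotate_def
  by (simp only: imp_conjR all_conj_distrib ball_conj_distrib conj_assoc)

lemma corner_sum_vanishes: "corner_sum n C \<Longrightarrow> n < i \<or> n < j \<or> n < k \<Longrightarrow> C i j k = 0"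
  unfolding corner_sum_def by blast

lemma corner_sum_eqI:
  assumes "corner_sum n C" "corner_sum n D" "\<And>i j k. i \<le> n \<Longrightarrow> j \<le> n \<Longrightarrow> k \<le> n \<Longrightarrow> C i j k = D i j k"
  shows "C = D"
proof (intro ext)
  fix i j k
  show "C i j k = D i j k"
    using assms corner_sum_vanishes[OF assms(1), of i j k] corner_sum_vanishes[OF assms(2), of i j k]
    by (cases "i \<le> n \<and> j \<le> n \<and> k \<le> n") auto
qed

lemma corner_sum_boundary_eq:
  assumes "corner_sum n C" "corner_sum n D" "i \<le> n" "j \<le> n" "k \<le> n"
    and "i \<in> {0, n} \<or> j \<in> {0, n} \<or> k \<in> {0, n}"
  shows "C i j k = D i j k"
  using assms unfolding corner_sum_def by auto

lemma steps_ok_Suc: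
  assumes "steps_ok n C" "i \<le> n" "j \<le> n" "k < n"
  shows "step_ok n i j (C i j (Suc k) - C i j k)"
proof -
  have "Suc k \<in> {1..n}"
    using assms(4) by simp
  then show ?thesis
    using assms(1-3) unfolding steps_ok_def by (metis diff_Suc_1)
qed

lemma steps_ok_lower_bound:
  assumes "steps_ok n C" "C i j 0 = 0" "i \<le> n" "j \<le> n" "k \<le> n"
  shows "int k * excess n i j \<le> C i j k"
  using \<open>k \<le> n\<close>
proof (induction k)
  case (Suc k)
  then show ?case
    using steps_ok_Suc[OF assms(1,3,4), of k] by (simp add: step_ok_iff algebra_simps)
qed (use assms in simp)

definition cs_min :: "nat \<Rightarrow> nat \<Rightarrow> nat \<Rightarrow> nat \<Rightarrow> int" where
  "cs_min n i j k = (if i \<le> n \<and> j \<le> n \<and> k \<le> n then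
     int (min i (min j k)) * max 0 (int i + int j + int k - int (min i (min j k)) - int n) else 0)"

lemma cs_min_swap12: "cs_min n i j k = cs_min n j i k"
  unfolding cs_min_def by (simp add: min.left_commute algebra_simps conj_commute conj_left_commute)

lemma cs_min_swap23: "cs_min n i j k = cs_min n i k j"
  unfolding cs_min_def by (simp add: min.commute algebra_simps conj_commute conj_left_commute)

lemma swap23_cs_min: "swap23 (cs_min n) = cs_min n"
  unfolding swap23_def by (intro ext) (rule cs_min_swap23[symmetric])

lemma rotate_cs_min: "rotate (cs_min n) = cs_min n"
  unfolding rotate_def by (intro ext) (metis cs_min_swap12 cs_min_swap23)

lemma cs_min_eq:
  assumes "i \<le> j" "j \<le> n" "k \<le> n"
  shows "cs_min n i j k = (if k \<le> i then int k * excess n i j else int i * excess n j k)"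
proof -
  have "min i (min j k) = (if k \<le> i then k else i)"
    using assms by auto
  then show ?thesis
    using assms unfolding cs_min_def excess_def by (auto simp: algebra_simps)
qed

lemma step_ok_cs_min_ordered:
  assumes "i \<le> j" "j \<le> n" "k \<in> {1..n}"
  shows "step_ok n i j (cs_min n i j k - cs_min n i j (k - 1))"
proof -
  consider "k \<le> i" | "k = i + 1" | "i + 1 < k" by linarith
  then have "cs_min n i j k - cs_min n i j (k - 1) =
      (if k \<le> i then excess n i j else if n < j + k then int i else 0)"
  proof cases
    case 1
    then have "k - 1 \<le> i" by simp
    then show ?thesis using 1 assms by (simp add: cs_min_eq of_nat_diff algebra_simps)
  next
    case 2
    then show ?thesis using assms by (simp add: cs_min_eq excess_def algebra_simps max_def)
  next
    case 3
    then have "\<not> k - 1 \<le> i" "\<not> k \<le> i" by auto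
    then show ?thesis using assms by (simp add: cs_min_eq excess_def of_nat_diff algebra_simps max_def)
  qed
  then show ?thesis
    using assms by (auto simp: step_ok_iff excess_def)
qed

lemma steps_ok_cs_min: "steps_ok n (cs_min n)"
  unfolding steps_ok_def
proof (intro allI impI ballI)
  fix i j k assume "i \<le> n" "j \<le> n" "k \<in> {1..n}"
  then show "step_ok n i j (cs_min n i j k - cs_min n i j (k - 1))"
    using step_ok_cs_min_ordered[of i j n k] step_ok_cs_min_ordered[of j i n k]
    by (cases "i \<le> j") (auto simp: cs_min_swap12[of n i j] step_ok_def ac_simps)
qed

lemma corner_sum_cs_min: "corner_sum n (cs_min n)"
proof -
  have "vanishes_outside n (cs_min n)"
    unfolding vanishes_outside_def cs_min_def by auto
  moreover have "boundary_ok n (cs_min n)"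
  proof -
    have "cs_min n i j n = int (i * j)" if "i \<le> n" "j \<le> n" for i j
      using that unfolding cs_min_def by (auto simp: min_def max_def)
    moreover have "cs_min n i j 0 = 0" for i j
      unfolding cs_min_def by auto
    ultimately show ?thesis
      unfolding boundary_ok_def by (metis cs_min_swap12 cs_min_swap23)
  qed
  ultimately show ?thesis
    unfolding corner_sum_iff_steps_ok swap23_cs_min rotate_cs_min using steps_ok_cs_min by simp
qed

lemma cs_min_le:
  assumes "corner_sum n C" "i \<le> n" "j \<le> n" "k \<le> n"
  shows "cs_min n i j k \<le> C i j k"
proof -
  have steps: "steps_ok n C" "steps_ok n (swap23 C)" "steps_ok n (rotate C)"
    and "boundary_ok n C"
    using assms(1) corner_sum_iff_steps_ok by auto
  then have "int k * excess n i j \<le> C i j k" "int j * excess n i k \<le> C i j k"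
    "int i * excess n j k \<le> C i j k"
    using steps_ok_lower_bound[OF steps(1), of i j k] steps_ok_lower_bound[OF steps(2), of i k j]
      steps_ok_lower_bound[OF steps(3), of j k i] assms
    unfolding boundary_ok_def swap23_def rotate_def by auto
  moreover have "cs_min n i j k \<in> {int k * excess n i j, int j * excess n i k, int i * excess n j k}"
    using assms unfolding cs_min_def excess_def by (auto simp: min_def algebra_simps)
  ultimately show ?thesis by auto
qed

text \<open>Reversing the third axis turns a step \<open>d\<close> of the line \<open>(i, n - j)\<close> into the step \<open>i - d\<close>
  of the line \<open>(i, j)\<close>, and this exchanges the two step bounds.\<close>

definition complement :: "nat \<Rightarrow> (nat \<Rightarrow> nat \<Rightarrow> nat \<Rightarrow> int) \<Rightarrow> nat \<Rightarrow> nat \<Rightarrow> nat \<Rightarrow> int" where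
  "complement n C = (\<lambda>i j k. if i \<le> n \<and> j \<le> n \<and> k \<le> n then int (i * j) - C i j (n - k) else 0)"

lemma step_ok_complement:
  assumes "step_ok n i (n - j) d" "i \<le> n" "j \<le> n"
  shows "step_ok n i j (int i - d)"
  using assms unfolding step_ok_def by (auto simp: of_nat_diff)

lemma corner_sum_complement:
  assumes "corner_sum n C"
  shows "corner_sum n (complement n C)"
proof -
  have boundary: "boundary_ok n C"
    using assms corner_sum_iff_steps_ok by blast
  have steps: "\<forall>i\<le>n. \<forall>j\<le>n. \<forall>k\<in>{1..n}.
        step_ok n i j (C i j k - C i j (k - 1)) \<and>
        step_ok n i j (C i k j - C i (k - 1) j) \<and>
        step_ok n i j (C k i j - C (k - 1) i j)"
    using assms unfolding corner_sum_def by (elim conjE)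
  show ?thesis
    unfolding corner_sum_def
  proof (intro conjI allI impI ballI)
    fix i j k assume "n < i \<or> n < j \<or> n < k"
    then show "complement n C i j k = 0"
      unfolding complement_def by auto
  next
    fix i j assume "i \<le> n" "j \<le> n"
    then show "complement n C i j 0 = 0" "complement n C i 0 j = 0" "complement n C 0 i j = 0"
      "complement n C i j n = int (i * j)" "complement n C i n j = int (i * j)"
      "complement n C n i j = int (i * j)"
      using boundary unfolding boundary_ok_def complement_def by (auto simp: of_nat_diff algebra_simps)
  next
    fix i j k assume ij: "i \<le> n" "j \<le> n" and k: "k \<in> {1..n}"
    have reflected: "n - k + 1 \<in> {1..n}" "n - (k - 1) = n - k + 1" "n - j \<le> n" "k - 1 \<le> n"
      using k by auto
    have "step_ok n i j (C i j (n - k + 1) - C i j (n - k))"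
      using steps ij reflected by (metis add_diff_cancel_right')
    then show "step_ok n i j (complement n C i j k - complement n C i j (k - 1))"
      using ij k reflected unfolding complement_def by (simp add: algebra_simps)
    have "complement n C i k j - complement n C i (k - 1) j = int i - (C i k (n - j) - C i (k - 1) (n - j))"
      using ij k unfolding complement_def by (auto simp: of_nat_diff algebra_simps)
    then show "step_ok n i j (complement n C i k j - complement n C i (k - 1) j)"
      using step_ok_complement[of n i j] steps ij k reflected by simp
    have "complement n C k i j - complement n C (k - 1) i j = int i - (C k i (n - j) - C (k - 1) i (n - j))"
      using ij k unfolding complement_def by (auto simp: of_nat_diff algebra_simps)
    then show "step_ok n i j (complement n C k i j - complement n C (k - 1) i j)"
      using step_ok_complement[of n i j] steps ij k reflected by simp
  qed
qed

definition cs_max :: "nat \<Rightarrow> nat \<Rightarrow> nat \<Rightarrow> nat \<Rightarrow> int" where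
  "cs_max n = complement n (cs_min n)"

lemma corner_sum_cs_max: "corner_sum n (cs_max n)"
  unfolding cs_max_def by (rule corner_sum_complement[OF corner_sum_cs_min])

lemma le_cs_max:
  assumes "corner_sum n C" "i \<le> n" "j \<le> n" "k \<le> n"
  shows "C i j k \<le> cs_max n i j k"
  using cs_min_le[OF corner_sum_complement[OF assms(1)], of i j "n - k"] assms
  unfolding cs_max_def complement_def by auto

definition decrement_at :: "(nat \<Rightarrow> nat \<Rightarrow> nat \<Rightarrow> int) \<Rightarrow> nat \<Rightarrow> nat \<Rightarrow> nat \<Rightarrow> nat \<Rightarrow> nat \<Rightarrow> nat \<Rightarrow> int" where
  "decrement_at C a b c = (\<lambda>i j k. if (i, j, k) = (a, b, c) then C i j k - 1 else C i j k)"

text \<open>\<open>deviation n C\<close> is \<open>n\<close> times the deviation of \<open>C\<close> from the real hypermatrix \<open>i j k / n\<close>,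
  whose steps \<open>i j / n\<close> lie strictly between the step bounds of every interior line.\<close>

definition deviation :: "nat \<Rightarrow> (nat \<Rightarrow> nat \<Rightarrow> nat \<Rightarrow> int) \<Rightarrow> nat \<Rightarrow> nat \<Rightarrow> nat \<Rightarrow> int" where
  "deviation n C i j k = int n * C i j k - int i * int j * int k"

lemma excess_mult_less:
  assumes "0 < a" "a < n" "0 < b" "b < n"
  shows "int n * excess n a b < int a * int b"
proof (cases "a + b \<le> n")
  case False
  have "0 < (int n - int a) * (int n - int b)"
    using assms by simp
  then show ?thesis
    using False by (simp add: excess_def algebra_simps)
qed (use assms in \<open>simp add: excess_def\<close>)

lemma mult_less_min:
  assumes "0 < a" "a < n" "0 < b" "b < n"
  shows "int a * int b < int n * int (min a b)"
proof -
  have "0 < int (min a b) * (int n - int (max a b))"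
    using assms by simp
  then show ?thesis
    by (simp add: min_def max_def algebra_simps split: if_splits)
qed

context
  fixes n :: nat and C D :: "nat \<Rightarrow> nat \<Rightarrow> nat \<Rightarrow> int" and a b c :: nat
  assumes steps_C: "steps_ok n C" and steps_D: "steps_ok n D"
    and D_le_C: "\<And>i j k. i \<le> n \<Longrightarrow> j \<le> n \<Longrightarrow> k \<le> n \<Longrightarrow> D i j k \<le> C i j k"
    and interior: "0 < a" "a < n" "0 < b" "b < n" "0 < c" "c < n"
    and gap: "D a b c < C a b c"
    and max_deviation: "\<And>i j k. i \<le> n \<Longrightarrow> j \<le> n \<Longrightarrow> k \<le> n \<Longrightarrow> D i j k < C i j k \<Longrightarrow>
                          deviation n C i j k \<le> deviation n C a b c"
begin

lemma excess_less_step_at_gap: "excess n a b < C a b c - C a b (c - 1)"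
proof (rule ccontr)
  assume "\<not> ?thesis"
  moreover have "step_ok n a b (C a b c - C a b (c - 1))" "step_ok n a b (D a b c - D a b (c - 1))"
    using steps_C steps_D interior unfolding steps_ok_def by simp_all
  ultimately have step_C: "C a b c - C a b (c - 1) = excess n a b"
    and "excess n a b \<le> D a b c - D a b (c - 1)"
    by (simp_all add: step_ok_iff)
  then have "D a b (c - 1) < C a b (c - 1)"
    using step_C gap by linarith
  then have "deviation n C a b (c - 1) \<le> deviation n C a b c"
    using max_deviation interior by simp
  moreover have "deviation n C a b (c - 1) = deviation n C a b c - int n * excess n a b + int a * int b"
    unfolding deviation_def using step_C interior by (simp add: of_nat_diff algebra_simps)
  ultimately show False
    using excess_mult_less[of a n b] interior by linarith
qed

lemma step_after_gap_less_min: "C a b (c + 1) - C a b c < int (min a b)"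
proof (rule ccontr)
  assume "\<not> ?thesis"
  moreover have "step_ok n a b (C a b (c + 1) - C a b c)" "step_ok n a b (D a b (c + 1) - D a b c)"
    using steps_ok_Suc[OF steps_C, of a b c] steps_ok_Suc[OF steps_D, of a b c] interior by simp_all
  ultimately have step_C: "C a b (c + 1) - C a b c = int (min a b)"
    and "D a b (c + 1) - D a b c \<le> int (min a b)"
    by (simp_all add: step_ok_iff)
  then have "D a b (c + 1) < C a b (c + 1)"
    using step_C gap by linarith
  then have "deviation n C a b (c + 1) \<le> deviation n C a b c"
    using max_deviation interior by simp
  moreover have "deviation n C a b (c + 1) = deviation n C a b c + int n * int (min a b) - int a * int b"
    unfolding deviation_def using step_C by (simp add: algebra_simps)
  ultimately show False
    using mult_less_min[of a n b] interior by linarith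
qed

lemma steps_ok_decrement_at: "steps_ok n (decrement_at C a b c)"
  unfolding steps_ok_def
proof (intro allI impI ballI)
  fix i j k assume ij: "i \<le> n" "j \<le> n" and k: "k \<in> {1..n}"
  have step: "step_ok n i j (C i j k - C i j (k - 1))"
    using steps_C ij k unfolding steps_ok_def by blast
  consider "(i, j, k) = (a, b, c)" | "(i, j, k - 1) = (a, b, c)"
    | "(i, j, k) \<noteq> (a, b, c)" "(i, j, k - 1) \<noteq> (a, b, c)"
    by blast
  then show "step_ok n i j (decrement_at C a b c i j k - decrement_at C a b c i j (k - 1))"
  proof cases
    case 1
    then show ?thesis
      using step excess_less_step_at_gap k unfolding decrement_at_def by (auto simp: step_ok_iff)
  next
    case 2
    then have "k = c + 1"
      using k by auto
    then show ?thesis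
      using 2 step step_after_gap_less_min unfolding decrement_at_def by (auto simp: step_ok_iff)
  next
    case 3
    then have "decrement_at C a b c i j k - decrement_at C a b c i j (k - 1) = C i j k - C i j (k - 1)"
      unfolding decrement_at_def by auto
    then show ?thesis
      using step by simp
  qed
qed

end

lemma swap23_decrement_at: "swap23 (decrement_at C a b c) = decrement_at (swap23 C) a c b"
  unfolding swap23_def decrement_at_def by (intro ext) auto

lemma rotate_decrement_at: "rotate (decrement_at C a b c) = decrement_at (rotate C) b c a"
  unfolding rotate_def decrement_at_def by (intro ext) auto

lemma deviation_swap23: "deviation n (swap23 C) i j k = deviation n C i k j"
  unfolding deviation_def swap23_def by (simp add: ac_simps)

lemma deviation_rotate: "deviation n (rotate C) i j k = deviation n C k i j"
  unfolding deviation_def rotate_def by (simp add: ac_simps)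

lemma corner_sum_decrement_at:
  assumes C: "corner_sum n C" and D: "corner_sum n D"
    and D_le_C: "\<And>i j k. i \<le> n \<Longrightarrow> j \<le> n \<Longrightarrow> k \<le> n \<Longrightarrow> D i j k \<le> C i j k"
    and interior: "0 < a" "a < n" "0 < b" "b < n" "0 < c" "c < n"
    and gap: "D a b c < C a b c"
    and max_deviation: "\<And>i j k. i \<le> n \<Longrightarrow> j \<le> n \<Longrightarrow> k \<le> n \<Longrightarrow> D i j k < C i j k \<Longrightarrow>
                          deviation n C i j k \<le> deviation n C a b c"
  shows "corner_sum n (decrement_at C a b c)"
proof -
  have steps: "steps_ok n C" "steps_ok n (swap23 C)" "steps_ok n (rotate C)"
    "steps_ok n D" "steps_ok n (swap23 D)" "steps_ok n (rotate D)"
    and "vanishes_outside n C" "boundary_ok n C"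
    using C D corner_sum_iff_steps_ok by auto
  have "steps_ok n (decrement_at C a b c)"
    using steps_ok_decrement_at[OF steps(1,4) D_le_C interior gap max_deviation] by blast
  moreover have "steps_ok n (swap23 (decrement_at C a b c))"
    unfolding swap23_decrement_at
  proof (rule steps_ok_decrement_at[OF steps(2,5) _ interior(1,2,5,6,3,4)])
    show "swap23 D a c b < swap23 C a c b"
      using gap by (simp add: swap23_def)
    fix i j k assume "i \<le> n" "j \<le> n" "k \<le> n"
    then show "swap23 D i j k \<le> swap23 C i j k"
      and "swap23 D i j k < swap23 C i j k \<Longrightarrow> deviation n (swap23 C) i j k \<le> deviation n (swap23 C) a c b"
      using D_le_C max_deviation unfolding deviation_swap23 by (simp_all add: swap23_def)
  qed
  moreover have "steps_ok n (rotate (decrement_at C a b c))"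
    unfolding rotate_decrement_at
  proof (rule steps_ok_decrement_at[OF steps(3,6) _ interior(3,4,5,6,1,2)])
    show "rotate D b c a < rotate C b c a"
      using gap by (simp add: rotate_def)
    fix i j k assume "i \<le> n" "j \<le> n" "k \<le> n"
    then show "rotate D i j k \<le> rotate C i j k"
      and "rotate D i j k < rotate C i j k \<Longrightarrow> deviation n (rotate C) i j k \<le> deviation n (rotate C) b c a"
      using D_le_C max_deviation unfolding deviation_rotate by (simp_all add: rotate_def)
  qed
  moreover have "vanishes_outside n (decrement_at C a b c)" "boundary_ok n (decrement_at C a b c)"
    using \<open>vanishes_outside n C\<close> \<open>boundary_ok n C\<close> interior
    unfolding vanishes_outside_def boundary_ok_def decrement_at_def by auto
  ultimately show ?thesis
    unfolding corner_sum_iff_steps_ok by blast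
qed

definition entry_sum :: "nat \<Rightarrow> (nat \<Rightarrow> nat \<Rightarrow> nat \<Rightarrow> int) \<Rightarrow> int" where
  "entry_sum n C = (\<Sum>i\<le>n. \<Sum>j\<le>n. \<Sum>k\<le>n. C i j k)"

lemma entry_sum_decrement_at:
  assumes "a \<le> n" "b \<le> n" "c \<le> n"
  shows "entry_sum n (decrement_at C a b c) = entry_sum n C - 1"
proof -
  have "decrement_at C a b c = (\<lambda>i j k. C i j k - (if k = c then if j = b then if i = a then 1 else 0 else 0 else 0))"
    unfolding decrement_at_def by (intro ext) auto
  then show ?thesis
    using assms unfolding entry_sum_def by (simp add: sum_subtractf sum.delta')
qed

lemma prec_gap:
  assumes "corner_sum n C" "corner_sum n D" "prec n C D" "C \<noteq> D"
  obtains a b c where "a \<le> n" "b \<le> n" "c \<le> n" "D a b c < C a b c"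
proof -
  obtain a b c where abc: "a \<le> n" "b \<le> n" "c \<le> n" "C a b c \<noteq> D a b c"
    using corner_sum_eqI[OF assms(1,2)] assms(4) by blast
  moreover have "D a b c \<le> C a b c"
    using assms(3) abc unfolding prec_def by blast
  ultimately show ?thesis
    using that by simp
qed

lemma entry_sum_strict_mono:
  assumes "corner_sum n C" "corner_sum n D" "prec n C D" "C \<noteq> D"
  shows "entry_sum n D < entry_sum n C"
proof -
  have le: "\<And>i j k. i \<le> n \<Longrightarrow> j \<le> n \<Longrightarrow> k \<le> n \<Longrightarrow> D i j k \<le> C i j k"
    using assms(3) unfolding prec_def by blast
  obtain a b c where abc: "a \<le> n" "b \<le> n" "c \<le> n" "D a b c < C a b c"
    using prec_gap[OF assms] .
  have "(\<Sum>k\<le>n. D a b k) < (\<Sum>k\<le>n. C a b k)"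
    using le abc by (intro sum_strict_mono_ex1) auto
  then have "(\<Sum>j\<le>n. \<Sum>k\<le>n. D a j k) < (\<Sum>j\<le>n. \<Sum>k\<le>n. C a j k)"
    using le abc by (intro sum_strict_mono_ex1) (auto intro!: sum_mono)
  then show ?thesis
    unfolding entry_sum_def using le abc by (intro sum_strict_mono_ex1) (auto intro!: sum_mono)
qed

lemma entry_sum_mono: "prec n C D \<Longrightarrow> entry_sum n D \<le> entry_sum n C"
  unfolding prec_def entry_sum_def by (intro sum_mono) auto

lemma prec_gap_max_deviation:
  assumes "corner_sum n C" "corner_sum n D" "prec n C D" "C \<noteq> D"
  obtains a b c where "a \<le> n" "b \<le> n" "c \<le> n" "D a b c < C a b c"
    and "\<And>i j k. i \<le> n \<Longrightarrow> j \<le> n \<Longrightarrow> k \<le> n \<Longrightarrow> D i j k < C i j k \<Longrightarrow>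
           deviation n C i j k \<le> deviation n C a b c"
proof -
  define gaps where "gaps = {(i, j, k). i \<le> n \<and> j \<le> n \<and> k \<le> n \<and> D i j k < C i j k}"
  define dev where "dev = (\<lambda>(i, j, k). deviation n C i j k)"
  have "gaps \<subseteq> {..n} \<times> {..n} \<times> {..n}"
    unfolding gaps_def by auto
  then have "finite gaps"
    by (rule finite_subset) simp
  obtain a0 b0 c0 where "a0 \<le> n" "b0 \<le> n" "c0 \<le> n" "D a0 b0 c0 < C a0 b0 c0"
    using prec_gap[OF assms] .
  then have "(a0, b0, c0) \<in> gaps"
    unfolding gaps_def by simp
  with \<open>finite gaps\<close> have "Max (dev ` gaps) \<in> dev ` gaps"
    by (intro Max_in) auto
  then obtain a b c where abc: "(a, b, c) \<in> gaps" "dev (a, b, c) = Max (dev ` gaps)"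
    by auto
  have "deviation n C i j k \<le> deviation n C a b c"
    if "i \<le> n" "j \<le> n" "k \<le> n" "D i j k < C i j k" for i j k
  proof -
    have "(i, j, k) \<in> gaps"
      using that unfolding gaps_def by simp
    then have "dev (i, j, k) \<le> Max (dev ` gaps)"
      using \<open>finite gaps\<close> by simp
    then show ?thesis
      using abc(2) unfolding dev_def by simp
  qed
  moreover have "a \<le> n" "b \<le> n" "c \<le> n" "D a b c < C a b c"
    using abc(1) unfolding gaps_def by auto
  ultimately show ?thesis
    using that by blast
qed

lemma corner_sum_unit_step:
  assumes C: "corner_sum n C" and D: "corner_sum n D" and "prec n C D" "C \<noteq> D"
  shows "\<exists>E. corner_sum n E \<and> prec n C E \<and> prec n E D \<and> entry_sum n E = entry_sum n C - 1"
proof -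
  have D_le_C: "\<And>i j k. i \<le> n \<Longrightarrow> j \<le> n \<Longrightarrow> k \<le> n \<Longrightarrow> D i j k \<le> C i j k"
    using assms(3) unfolding prec_def by blast
  obtain a b c where box: "a \<le> n" "b \<le> n" "c \<le> n" and gap: "D a b c < C a b c"
    and max_deviation: "\<And>i j k. i \<le> n \<Longrightarrow> j \<le> n \<Longrightarrow> k \<le> n \<Longrightarrow> D i j k < C i j k \<Longrightarrow>
                          deviation n C i j k \<le> deviation n C a b c"
    using prec_gap_max_deviation[OF assms] by blast
  then have "\<not> (a \<in> {0, n} \<or> b \<in> {0, n} \<or> c \<in> {0, n})"
    using corner_sum_boundary_eq[OF C D box] by force
  then have interior: "0 < a" "a < n" "0 < b" "b < n" "0 < c" "c < n"
    using box by auto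
  have "corner_sum n (decrement_at C a b c)"
    by (rule corner_sum_decrement_at[OF C D D_le_C interior gap max_deviation])
  moreover have "prec n C (decrement_at C a b c)" "prec n (decrement_at C a b c) D"
    using D_le_C gap unfolding prec_def decrement_at_def by auto
  ultimately show ?thesis
    using entry_sum_decrement_at[OF box] by blast
qed

lemma finite_CS: "finite (CS n)"
proof -
  define box where "box = {..n} \<times> {..n} \<times> {..n}"
  define extend where "extend = (\<lambda>g i j k. if (i, j, k) \<in> box then g (i, j, k) else (0::int))"
  have "CS n \<subseteq> extend ` PiE box (\<lambda>(i, j, k). {cs_min n i j k..cs_max n i j k})"
  proof
    fix C assume "C \<in> CS n"
    then have C: "corner_sum n C"
      by (simp add: CS_def)
    have "C = extend (restrict (\<lambda>(i, j, k). C i j k) box)"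
      using corner_sum_vanishes[OF C] unfolding extend_def box_def by (intro ext) auto
    moreover have "restrict (\<lambda>(i, j, k). C i j k) box \<in> PiE box (\<lambda>(i, j, k). {cs_min n i j k..cs_max n i j k})"
      using cs_min_le[OF C] le_cs_max[OF C] unfolding box_def by auto
    ultimately show "C \<in> extend ` PiE box (\<lambda>(i, j, k). {cs_min n i j k..cs_max n i j k})"
      by blast
  qed
  moreover have "finite (PiE box (\<lambda>(i, j, k). {cs_min n i j k..cs_max n i j k}))"
    unfolding box_def by (intro finite_PiE) auto
  ultimately show ?thesis
    using finite_subset by blast
qed

section \<open>The entry sums of the extremal elements\<close>

lemma sum_atMost_add2_shift:
  fixes f :: "nat \<Rightarrow> 'a::comm_monoid_add"
  shows "(\<Sum>i\<le>n + 2. f i) = f 0 + (\<Sum>i\<le>n. f (i + 1)) + f (n + 2)"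
proof -
  have "(\<Sum>i\<le>n + 2. f i) = (\<Sum>i\<le>Suc n. f i) + f (Suc (Suc n))"
    by (simp add: sum.atMost_Suc)
  also have "(\<Sum>i\<le>Suc n. f i) = f 0 + (\<Sum>i\<le>n. f (Suc i))"
    by (rule sum.atMost_Suc_shift)
  finally show ?thesis
    by (simp add: add.assoc)
qed

lemma nested_sum_atMost_add2_shift:
  fixes f :: "nat \<Rightarrow> nat \<Rightarrow> 'a::comm_monoid_add"
  shows "(\<Sum>i\<le>n + 2. \<Sum>j\<le>n + 2. f i j) =
     (\<Sum>i\<le>n. \<Sum>j\<le>n. f (i + 1) (j + 1)) + (\<Sum>j\<le>n + 2. f 0 j + f (n + 2) j)
      + (\<Sum>i\<le>n. f (i + 1) 0 + f (i + 1) (n + 2))"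
  by (simp only: sum_atMost_add2_shift sum.distrib add_ac)

lemma double_gauss_sum_atMost: "2 * (\<Sum>i\<le>n. int i) = int n * (int n + 1)"
  using double_gauss_sum[where 'a = int, of n] by (simp add: atLeast0AtMost)

lemma triple_sum_atMost_mult_Suc: "3 * (\<Sum>i\<le>n. int i * (int i + 1)) = int n * (int n + 1) * (int n + 2)"
  by (induction n) (auto simp: algebra_simps)

lemma excess_Suc_Suc [simp]: "excess (Suc (Suc n)) (Suc i) (Suc j) = excess n i j"
  unfolding excess_def by simp

lemma excess_0_left [simp]: "j \<le> n \<Longrightarrow> excess n 0 j = 0"
  and excess_0_right [simp]: "i \<le> n \<Longrightarrow> excess n i 0 = 0"
  and excess_self_left [simp]: "excess n n j = int j"
  and excess_self_right [simp]: "excess n i n = int i"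
  unfolding excess_def by simp_all

lemma excess_commute: "excess n i j = excess n j i"
  unfolding excess_def by (simp add: add.commute)

text \<open>The index is the degree of the summand. Passing from \<open>(n, i, j)\<close> to \<open>(n + 2, i + 1, j + 1)\<close>
  keeps the excess, so each of these sums grows by (a multiple of) the previous one.\<close>

definition excess_sum1 :: "nat \<Rightarrow> int" where
  "excess_sum1 n = (\<Sum>i\<le>n. \<Sum>j\<le>n. excess n i j)"

definition excess_sum2 :: "nat \<Rightarrow> int" where
  "excess_sum2 n = (\<Sum>i\<le>n. \<Sum>j\<le>n. excess n i j * (int (min i j) + int n - int (max i j) + 1))"

definition excess_sum3 :: "nat \<Rightarrow> int" where
  "excess_sum3 n = (\<Sum>i\<le>n. \<Sum>j\<le>n. int (min i j) * excess n i j * (int n - int (max i j)))"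

definition min_max_sum :: "nat \<Rightarrow> int" where
  "min_max_sum n = (\<Sum>i\<le>n. \<Sum>j\<le>n. int (min i j) * int (max i j) * (int (max i j) + 1))"

lemma excess_sum1_add2:
  "excess_sum1 (n + 2) = excess_sum1 n + (\<Sum>j\<le>n + 2. int j) + (\<Sum>i\<le>n. int i + 1)"
proof -
  have "(\<Sum>j\<le>n + 2. excess (n + 2) 0 j + excess (n + 2) (n + 2) j) = (\<Sum>j\<le>n + 2. int j)"
    by (intro sum.cong) auto
  moreover have "(\<Sum>i\<le>n. excess (n + 2) (i + 1) 0 + excess (n + 2) (i + 1) (n + 2)) = (\<Sum>i\<le>n. int i + 1)"
    by (intro sum.cong) auto
  ultimately show ?thesis
    unfolding excess_sum1_def nested_sum_atMost_add2_shift[of _ n] by simp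
qed

lemma excess_sum1_closed: "6 * excess_sum1 n = int n * (int n + 1) * (int n + 2)"
proof (induction n rule: nat_induct2)
  case (step n)
  have "(\<Sum>i\<le>n. int i + 1) = (\<Sum>i\<le>n. int i) + int n + 1"
    by (simp add: sum.distrib)
  then show ?case
    using step excess_sum1_add2[of n] double_gauss_sum_atMost[of "n + 2"] double_gauss_sum_atMost[of n]
    by (simp add: algebra_simps)
qed (simp_all add: excess_sum1_def excess_def)

lemma excess_sum2_add2:
  "excess_sum2 (n + 2) = excess_sum2 n + 2 * excess_sum1 n
     + (\<Sum>j\<le>n + 2. int j * (int j + 1)) + (\<Sum>i\<le>n + 1. int i * (int i + 1))"
proof -
  have "(\<Sum>i\<le>n. \<Sum>j\<le>n. excess n i j * (int (min (i + 1) (j + 1)) + int (n + 2) - int (max (i + 1) (j + 1)) + 1))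
      = (\<Sum>i\<le>n. \<Sum>j\<le>n. excess n i j * (int (min i j) + int n - int (max i j) + 1) + 2 * excess n i j)"
    by (intro sum.cong refl) (simp add: algebra_simps)
  also have "\<dots> = excess_sum2 n + 2 * excess_sum1 n"
    unfolding excess_sum2_def excess_sum1_def by (simp add: sum.distrib sum_distrib_left)
  finally have interior: "(\<Sum>i\<le>n. \<Sum>j\<le>n. excess n i j * (int (min (i + 1) (j + 1)) + int (n + 2) - int (max (i + 1) (j + 1)) + 1))
      = excess_sum2 n + 2 * excess_sum1 n" .
  have "(\<Sum>j\<le>n + 2. excess (n + 2) 0 j * (int (min 0 j) + int (n + 2) - int (max 0 j) + 1)
        + excess (n + 2) (n + 2) j * (int (min (n + 2) j) + int (n + 2) - int (max (n + 2) j) + 1))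
      = (\<Sum>j\<le>n + 2. int j * (int j + 1))"
    by (intro sum.cong) (auto simp: min_def max_def)
  moreover have "(\<Sum>i\<le>n. excess (n + 2) (i + 1) 0 * (int (min (i + 1) 0) + int (n + 2) - int (max (i + 1) 0) + 1)
        + excess (n + 2) (i + 1) (n + 2) * (int (min (i + 1) (n + 2)) + int (n + 2) - int (max (i + 1) (n + 2)) + 1))
      = (\<Sum>i\<le>n. int (i + 1) * (int (i + 1) + 1))"
    by (intro sum.cong) (auto simp: min_def max_def algebra_simps)
  moreover have "(\<Sum>i\<le>n. int (i + 1) * (int (i + 1) + 1)) = (\<Sum>i\<le>n + 1. int i * (int i + 1))"
    by (simp only: Suc_eq_plus1[symmetric] sum.atMost_Suc_shift)
  ultimately show ?thesis
    unfolding excess_sum2_def[of "n + 2"] nested_sum_atMost_add2_shift interior[symmetric] by simp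
qed

lemma excess_sum2_closed:
  "16 * excess_sum2 n = 2 * int n ^ 4 + 8 * int n ^ 3 + 12 * int n ^ 2 + 8 * int n + 1 - (-1) ^ n"
proof (induction n rule: nat_induct2)
  case (step n)
  then show ?case
    using excess_sum2_add2[of n] excess_sum1_closed[of n]
      triple_sum_atMost_mult_Suc[of "n + 2"] triple_sum_atMost_mult_Suc[of "n + 1"]
    by (simp add: algebra_simps eval_nat_numeral)
qed (simp_all add: excess_sum2_def excess_def)

lemma excess_sum3_add2: "excess_sum3 (n + 2) = excess_sum3 n + excess_sum2 n"
proof -
  have "(\<Sum>i\<le>n. \<Sum>j\<le>n. int (min (i + 1) (j + 1)) * excess n i j * (int (n + 2) - int (max (i + 1) (j + 1))))
      = (\<Sum>i\<le>n. \<Sum>j\<le>n. int (min i j) * excess n i j * (int n - int (max i j))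
           + excess n i j * (int (min i j) + int n - int (max i j) + 1))"
    by (intro sum.cong refl) (simp add: algebra_simps)
  also have "\<dots> = excess_sum3 n + excess_sum2 n"
    unfolding excess_sum3_def excess_sum2_def by (simp add: sum.distrib)
  finally have interior: "(\<Sum>i\<le>n. \<Sum>j\<le>n. int (min (i + 1) (j + 1)) * excess n i j * (int (n + 2) - int (max (i + 1) (j + 1))))
      = excess_sum3 n + excess_sum2 n" .
  have "(\<Sum>j\<le>n + 2. int (min 0 j) * excess (n + 2) 0 j * (int (n + 2) - int (max 0 j))
        + int (min (n + 2) j) * excess (n + 2) (n + 2) j * (int (n + 2) - int (max (n + 2) j))) = 0"
    by (intro sum.neutral) (auto simp: max_def)
  moreover have "(\<Sum>i\<le>n. int (min (i + 1) 0) * excess (n + 2) (i + 1) 0 * (int (n + 2) - int (max (i + 1) 0))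
        + int (min (i + 1) (n + 2)) * excess (n + 2) (i + 1) (n + 2) * (int (n + 2) - int (max (i + 1) (n + 2)))) = 0"
    by (intro sum.neutral) (auto simp: max_def)
  ultimately show ?thesis
    unfolding excess_sum3_def[of "n + 2"] nested_sum_atMost_add2_shift interior[symmetric] by simp
qed

lemma excess_sum3_closed: "480 * excess_sum3 n = 6 * int n ^ 5 - 20 * int n ^ 3 - int n - 15 * (-1) ^ n * int n"
proof (induction n rule: nat_induct2)
  case (step n)
  then show ?case
    using excess_sum3_add2[of n] excess_sum2_closed[of n] by (simp add: algebra_simps eval_nat_numeral)
qed (simp_all add: excess_sum3_def excess_def)

lemma min_max_sum_closed:
  "60 * min_max_sum n = 12 * int n ^ 5 + 45 * int n ^ 4 + 50 * int n ^ 3 + 15 * int n ^ 2 - 2 * int n"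
proof (induction n)
  case (Suc n)
  let ?f = "\<lambda>i j. int (min i j) * int (max i j) * (int (max i j) + 1)"
  have "(\<Sum>i\<le>n. ?f i (Suc n)) = (\<Sum>i\<le>n. int i * ((int n + 1) * (int n + 2)))"
    by (intro sum.cong refl) (simp add: min_def max_def algebra_simps)
  then have "(\<Sum>i\<le>n. ?f i (Suc n)) = (\<Sum>i\<le>n. int i) * ((int n + 1) * (int n + 2))"
    by (simp only: sum_distrib_right)
  moreover have "(\<Sum>j\<le>n. ?f (Suc n) j) = (\<Sum>i\<le>n. ?f i (Suc n))"
    by (simp add: min.commute max.commute)
  moreover have "min_max_sum (Suc n) = min_max_sum n + (\<Sum>i\<le>n. ?f i (Suc n)) + (\<Sum>j\<le>n. ?f (Suc n) j)
      + ?f (Suc n) (Suc n)"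
    unfolding min_max_sum_def by (simp only: sum.atMost_Suc sum.distrib add_ac)
  ultimately have "min_max_sum (Suc n) = min_max_sum n + 2 * (\<Sum>i\<le>n. int i) * ((int n + 1) * (int n + 2))
      + (int n + 1) * (int n + 1) * (int n + 2)"
    by (simp add: algebra_simps)
  then show ?case
    using Suc double_gauss_sum_atMost[of n] by (simp add: algebra_simps eval_nat_numeral)
qed (simp add: min_max_sum_def)

lemma double_sum_excess_line:
  assumes "j \<le> n"
  shows "2 * (\<Sum>k\<le>m. excess n j k) = excess n j m * (excess n j m + 1)"
proof (induction m)
  case (Suc m)
  show ?case
  proof (cases "n \<le> j + m")
    case True
    then have "excess n j (Suc m) = excess n j m + 1"
      by (simp add: excess_def)
    then show ?thesis
      using Suc by (simp add: algebra_simps)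
  next
    case False
    then have "excess n j (Suc m) = 0" "excess n j m = 0"
      by (simp_all add: excess_def)
    then show ?thesis
      using Suc by simp
  qed
qed (use assms in simp)

lemma sum_atMost_if_le_split:
  fixes f g :: "nat \<Rightarrow> 'a::ab_group_add"
  assumes "i \<le> n"
  shows "(\<Sum>k\<le>n. if k \<le> i then f k else g k) = (\<Sum>k\<le>i. f k) + (\<Sum>k\<le>n. g k) - (\<Sum>k\<le>i. g k)"
  using assms by (induction n rule: dec_induct) simp_all

lemma double_line_sum_cs_min_ordered:
  assumes "i \<le> j" "j \<le> n"
  shows "2 * (\<Sum>k\<le>n. cs_min n i j k) = int i * int j * (int j + 1) + int i * excess n i j * (int n - int j)"
proof -
  let ?e = "excess n i j"
  have "(\<Sum>k\<le>n. cs_min n i j k) = (\<Sum>k\<le>n. if k \<le> i then int k * ?e else int i * excess n j k)"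
    using assms by (intro sum.cong refl) (simp add: cs_min_eq)
  also have "\<dots> = ?e * (\<Sum>k\<le>i. int k) + int i * ((\<Sum>k\<le>n. excess n j k) - (\<Sum>k\<le>i. excess n j k))"
    using assms by (simp add: sum_atMost_if_le_split sum_distrib_left sum_distrib_right algebra_simps)
  finally have "2 * (\<Sum>k\<le>n. cs_min n i j k)
      = ?e * (2 * (\<Sum>k\<le>i. int k)) + int i * (2 * (\<Sum>k\<le>n. excess n j k) - 2 * (\<Sum>k\<le>i. excess n j k))"
    by (simp add: algebra_simps)
  also have "\<dots> = ?e * (int i * (int i + 1)) + int i * (int j * (int j + 1) - ?e * (?e + 1))"
    using double_gauss_sum_atMost[of i] double_sum_excess_line[OF assms(2), of n]
      double_sum_excess_line[OF assms(2), of i]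
    by (simp add: excess_commute[of n j i])
  also have "\<dots> = int i * int j * (int j + 1) + int i * ?e * (int n - int j)"
    by (cases "n < i + j") (auto simp: excess_def algebra_simps)
  finally show ?thesis .
qed

lemma double_line_sum_cs_min:
  assumes "i \<le> n" "j \<le> n"
  shows "2 * (\<Sum>k\<le>n. cs_min n i j k) = int (min i j) * int (max i j) * (int (max i j) + 1)
     + int (min i j) * excess n i j * (int n - int (max i j))"
proof (cases "i \<le> j")
  case True
  then show ?thesis
    using double_line_sum_cs_min_ordered[OF True assms(2)] by (simp add: min_def max_def)
next
  case False
  have "(\<Sum>k\<le>n. cs_min n i j k) = (\<Sum>k\<le>n. cs_min n j i k)"
    by (simp add: cs_min_swap12)
  then show ?thesis
    using double_line_sum_cs_min_ordered[of j i n] False assms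
    by (simp add: min_def max_def excess_commute[of n j i])
qed

lemma double_entry_sum_cs_min: "2 * entry_sum n (cs_min n) = min_max_sum n + excess_sum3 n"
proof -
  have "2 * entry_sum n (cs_min n) = (\<Sum>i\<le>n. \<Sum>j\<le>n. 2 * (\<Sum>k\<le>n. cs_min n i j k))"
    unfolding entry_sum_def by (simp add: sum_distrib_left)
  also have "\<dots> = min_max_sum n + excess_sum3 n"
    unfolding min_max_sum_def excess_sum3_def by (simp add: double_line_sum_cs_min sum.distrib)
  finally show ?thesis .
qed

lemma entry_sum_cs_max: "entry_sum n (cs_max n) = int (n + 1) * (\<Sum>i\<le>n. int i)\<^sup>2 - entry_sum n (cs_min n)"
proof -
  have reflect: "(\<Sum>k\<le>n. cs_min n i j (n - k)) = (\<Sum>k\<le>n. cs_min n i j k)" for i j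
    using sum.atLeastAtMost_rev[of "cs_min n i j" 0 n] by (simp add: atLeast0AtMost)
  have "entry_sum n (cs_max n) = (\<Sum>i\<le>n. \<Sum>j\<le>n. \<Sum>k\<le>n. int i * int j - cs_min n i j (n - k))"
    unfolding entry_sum_def cs_max_def complement_def by simp
  also have "\<dots> = (\<Sum>i\<le>n. \<Sum>j\<le>n. int (n + 1) * (int i * int j) - (\<Sum>k\<le>n. cs_min n i j k))"
    by (simp add: sum_subtractf reflect)
  also have "\<dots> = int (n + 1) * (\<Sum>i\<le>n. \<Sum>j\<le>n. int i * int j) - entry_sum n (cs_min n)"
    unfolding entry_sum_def by (simp add: sum_subtractf sum_distrib_left)
  also have "(\<Sum>i\<le>n. \<Sum>j\<le>n. int i * int j) = (\<Sum>i\<le>n. int i)\<^sup>2"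
    by (simp add: power2_eq_square sum_product)
  finally show ?thesis .
qed

lemma entry_sum_cs_max_minus_cs_min:
  "480 * (entry_sum n (cs_max n) - entry_sum n (cs_min n)) = 18 * int n ^ 5 - 20 * int n ^ 3 + (17 + 15 * (-1) ^ n) * int n"
proof -
  have "480 * (entry_sum n (cs_max n) - entry_sum n (cs_min n))
      = 120 * int (n + 1) * (2 * (\<Sum>i\<le>n. int i))\<^sup>2 - 8 * (60 * min_max_sum n) - 480 * excess_sum3 n"
    using entry_sum_cs_max[of n] double_entry_sum_cs_min[of n] by (simp add: algebra_simps power2_eq_square)
  then show ?thesis
    unfolding double_gauss_sum_atMost min_max_sum_closed excess_sum3_closed by (simp add: algebra_simps eval_nat_numeral)
qed

section \<open>The rank\<close>

lemma unit_step_rank_CS: "unit_step_rank (CS n) (prec n) (\<lambda>C. - entry_sum n C)"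
proof
  fix C D E assume "C \<in> CS n" "D \<in> CS n" "E \<in> CS n"
  then have C: "corner_sum n C" and D: "corner_sum n D"
    by (simp_all add: CS_def)
  show "prec n C C"
    by (simp add: prec_def)
  show "prec n C D \<Longrightarrow> prec n D E \<Longrightarrow> prec n C E"
    unfolding prec_def by (meson order_trans)
  show "prec n C D \<Longrightarrow> C \<noteq> D \<Longrightarrow> - entry_sum n C < - entry_sum n D"
    using entry_sum_strict_mono[OF C D] by simp
  show "\<exists>E\<in>CS n. prec n C E \<and> prec n E D \<and> - entry_sum n E = - entry_sum n C + 1"
    if CD: "prec n C D" "C \<noteq> D"
  proof -
    obtain E where "corner_sum n E" "prec n C E" "prec n E D" "entry_sum n E = entry_sum n C - 1"
      using corner_sum_unit_step[OF C D CD] by blast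
    then show ?thesis
      unfolding CS_def by force
  qed
qed

lemma graded_of_rank_CS:
  "graded_of_rank (CS n) (prec n) (nat (entry_sum n (cs_max n) - entry_sum n (cs_min n)))"
proof -
  have "cs_max n \<in> CS n" "cs_min n \<in> CS n"
    using corner_sum_cs_max corner_sum_cs_min by (simp_all add: CS_def)
  moreover have "prec n (cs_max n) C \<and> prec n C (cs_min n)" if "C \<in> CS n" for C
    using le_cs_max cs_min_le that by (simp add: CS_def prec_def)
  ultimately show ?thesis
    using unit_step_rank.graded_of_rank_if_bounded[OF unit_step_rank_CS finite_CS] by fastforce
qed

lemma four_powr_one_plus_sign: "(4::real) powr (1 + (-1) ^ n) = (17 + 15 * (-1) ^ n) / 2"
  by (cases "even n") (simp_all add: powr_numeral)

theorem mainTheorem15: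
  fixes n :: nat
  shows "\<exists>r. graded_of_rank (CS n) (prec n) r \<and>
    real r = (9 * real n ^ 5 - 10 * real n ^ 3 + 4 powr (1 + (-1) ^ n) * real n) / 240"
proof (intro exI conjI)
  let ?rank = "entry_sum n (cs_max n) - entry_sum n (cs_min n)"
  show "graded_of_rank (CS n) (prec n) (nat ?rank)"
    by (rule graded_of_rank_CS)
  have "0 \<le> ?rank"
    using entry_sum_mono[of n "cs_max n" "cs_min n"] le_cs_max[OF corner_sum_cs_min]
    by (simp add: prec_def)
  moreover have "480 * real_of_int ?rank = 18 * real n ^ 5 - 20 * real n ^ 3 + (17 + 15 * (-1) ^ n) * real n"
    using arg_cong[OF entry_sum_cs_max_minus_cs_min[of n], of real_of_int] by simp
  ultimately show "real (nat ?rank) = (9 * real n ^ 5 - 10 * real n ^ 3 + 4 powr (1 + (-1) ^ n) * real n) / 240"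
    unfolding four_powr_one_plus_sign by (simp add: field_simps)
qed

end
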